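(* Assume $n>R$ and let $\rho_{\min}:=\min_r\rho_r$. For every $f\in\mathcal F$, $$\left(1-\frac{2}{n\rho_{\min}}\right)\mathrm L_\Omega(f)\le\mathbb E[\bar U_\Omega(f)]\le\left(1+\frac{R}{n-R}\right)\mathrm L_\Omega(f),$$ the expectation being over the labeled sample. In particular $\mathbb E[\bar U_\Omega(f)]\to\mathrm L_\Omega(f)$ as $N\to\infty$.
   Context: Setup: Let $\mathcal X$ be a measurable space, $R\ge2$, $\rho=(\rho_1,\dots,\rho_R)$ a probability vector with all $\rho_r>0$, and $\mathcal D_1,\dots,\mathcal D_R$ distributions on $\mathcal X$; $\bar{\mathcal D}:=\sum_r\rho_r\mathcal D_r$. A labeled sample consists of $N$ i.i.d. pairs $(X_j,Y_j)$ with $\mathbb P(Y_j=r)=\rho_r$ and $X_j\mid Y_j=r\sim\mathcal D_r$; $S=(X_1,\dots,X_N)$ (elements distinguished by index), $S_r=\{X_j:Y_j=r\}$, $N_r=|S_r|$, $\widehat\rho_r=N_r/N$. Fix an integer $k\ge1$. $\mathcal F$ is a class of maps $f:\mathcal X\to\mathbb R^d$, $\phi:\mathbb R^k\to\mathbb R_+$, and $\ell_{\phi,f}(x,x^+,x_1^-,\dots,x_k^-):=\phi\big((f(x)^\top[f(x^+)-f(x_i^-)])_{i=1}^k\big)$, with $0\le\ell_{\phi,f}\le\mathcal B$ for all $f\in\mathcal F$. Population risk with arbitrary collisions: $\mathrm L_\Omega(f):=\sum_r\rho_r\,\mathbb E\big[\ell_{\phi,f}(X,X^+,X^-_1,\dots,X^-_k)\big]$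 with $X,X^+\sim\mathcal D_r$, $X_i^-\sim\bar{\mathcal D}$, all independent. Auxiliary estimator: $n:=2\lfloor N/(k+2)\rfloor$. $\Pi$ is the set of all permutations of $[N]$. For $\pi\in\Pi$ let $I_\pi=\{\pi(1),\dots,\pi(n)\}$, $n_r^\pi:=|\{j\in I_\pi:Y_j=r\}|$, and let $\Omega_r^\pi$ be the set of index tuples $(a,b,c_1,\dots,c_k)$ of pairwise distinct indices in $[N]$ with $a,b\in I_\pi$, $Y_a=Y_b=r$, and $c_1,\dots,c_k\notin I_\pi$. $U_{\Omega_r^\pi}(f)$ is the average of $\ell_{\phi,f}(X_a,X_b,X_{c_1},\dots,X_{c_k})$ over $\Omega_r^\pi$ ($:=0$ if empty). $\omega_r^\pi:=\lfloor n_r^\pi/2\rfloor/\sum_{q}\lfloor n_q^\pi/2\rfloor$ ($:=0$ if the denominator is $0$). $\bar U_\Omega(f):=\frac{1}{N!}\sum_{\pi\in\Pi}\sum_{r=1}^R\omega_r^\pi U_{\Omega_r^\pi}(f)$. *)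

theory Defs
  imports "HOL-Probability.Probability"
begin

text \<open>Labels are 0,...,R-1; sample indices are 0,...,N-1; k = CARD('k); d = CARD('d).\<close>

definition closs ::
  "(real^'k \<Rightarrow> real) \<Rightarrow> ('a \<Rightarrow> real^'d) \<Rightarrow> 'a \<Rightarrow> 'a \<Rightarrow> ('k \<Rightarrow> 'a) \<Rightarrow> real" where
  "closs \<phi> f x xp xn = \<phi> (\<chi> i. f x \<bullet> (f xp - f (xn i)))"

definition mixture :: "'a measure \<Rightarrow> nat \<Rightarrow> (nat \<Rightarrow> real) \<Rightarrow> (nat \<Rightarrow> 'a measure) \<Rightarrow> 'a measure" where
  "mixture M R \<rho> D =
     measure_of (space M) (sets M) (\<lambda>A. \<Sum>r<R. ennreal (\<rho> r) * emeasure (D r) A)"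

definition pop_risk ::
  "'a measure \<Rightarrow> nat \<Rightarrow> (nat \<Rightarrow> real) \<Rightarrow> (nat \<Rightarrow> 'a measure) \<Rightarrow>
   (real^'k \<Rightarrow> real) \<Rightarrow> ('a \<Rightarrow> real^'d) \<Rightarrow> real" where
  "pop_risk M R \<rho> D \<phi> f =
     (\<Sum>r<R. \<rho> r * (\<integral>z. closs \<phi> f (fst z) (fst (snd z)) (snd (snd z))
        \<partial>(D r \<Otimes>\<^sub>M (D r \<Otimes>\<^sub>M PiM (UNIV :: 'k set) (\<lambda>_. mixture M R \<rho> D)))))"

definition half_size :: "nat \<Rightarrow> nat \<Rightarrow> nat" where
  "half_size k N = 2 * (N div (k + 2))"

definition Ipi :: "nat \<Rightarrow> nat \<Rightarrow> (nat \<Rightarrow> nat) \<Rightarrow> nat set" where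
  "Ipi k N \<pi> = \<pi> ` {..<half_size k N}"

definition npi :: "nat \<Rightarrow> nat \<Rightarrow> (nat \<Rightarrow> nat) \<Rightarrow> (nat \<Rightarrow> nat) \<Rightarrow> nat \<Rightarrow> nat" where
  "npi k N ys \<pi> r = card {j \<in> Ipi k N \<pi>. ys j = r}"

definition Omega_pi :: "nat \<Rightarrow> (nat \<Rightarrow> nat) \<Rightarrow> (nat \<Rightarrow> nat) \<Rightarrow> nat \<Rightarrow> (nat \<times> nat \<times> ('k \<Rightarrow> nat)) set" where
  "Omega_pi N ys \<pi> r =
     (let I = Ipi CARD('k) N \<pi> in
      {(a, b, c). a \<in> I \<and> b \<in> I \<and> a \<noteq> b \<and> ys a = r \<and> ys b = r \<and>
                  inj c \<and> range c \<subseteq> {..<N} - I \<and> a \<notin> range c \<and> b \<notin> range c})"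

definition U_Omega ::
  "(real^'k \<Rightarrow> real) \<Rightarrow> ('a \<Rightarrow> real^'d) \<Rightarrow> nat \<Rightarrow> (nat \<Rightarrow> 'a) \<Rightarrow> (nat \<Rightarrow> nat) \<Rightarrow>
   (nat \<Rightarrow> nat) \<Rightarrow> nat \<Rightarrow> real" where
  "U_Omega \<phi> f N xs ys \<pi> r =
     (let T = (Omega_pi N ys \<pi> r :: (nat \<times> nat \<times> ('k \<Rightarrow> nat)) set) in
      if T = {} then 0
      else (\<Sum>(a, b, c)\<in>T. closs \<phi> f (xs a) (xs b) (xs \<circ> c)) / real (card T))"

definition omega_w :: "nat \<Rightarrow> nat \<Rightarrow> nat \<Rightarrow> (nat \<Rightarrow> nat) \<Rightarrow> (nat \<Rightarrow> nat) \<Rightarrow> nat \<Rightarrow> real" where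
  "omega_w R k N ys \<pi> r =
     (let den = (\<Sum>q<R. npi k N ys \<pi> q div 2) in
      if den = 0 then 0 else real (npi k N ys \<pi> r div 2) / real den)"

definition Ubar ::
  "nat \<Rightarrow> (real^'k \<Rightarrow> real) \<Rightarrow> ('a \<Rightarrow> real^'d) \<Rightarrow> nat \<Rightarrow> (nat \<Rightarrow> 'a) \<Rightarrow> (nat \<Rightarrow> nat) \<Rightarrow> real" where
  "Ubar R \<phi> f N xs ys =
     (1 / fact N) * (\<Sum>\<pi>\<in>{\<pi>. \<pi> permutes {..<N}}.
        \<Sum>r<R. omega_w R CARD('k) N ys \<pi> r * U_Omega \<phi> f N xs ys \<pi> r)"

text \<open>Expectation over the labeled sample: labels \<open>Y_j\<close> i.i.d. with \<open>P(Y_j = r) = \<rho>_r\<close>,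
  and, given the labels, \<open>X_j\<close> independent with \<open>X_j \<sim> D_{Y_j}\<close>.\<close>
definition sample_expect ::
  "nat \<Rightarrow> (nat \<Rightarrow> real) \<Rightarrow> (nat \<Rightarrow> 'a measure) \<Rightarrow> nat \<Rightarrow>
   ((nat \<Rightarrow> 'a) \<Rightarrow> (nat \<Rightarrow> nat) \<Rightarrow> real) \<Rightarrow> real" where
  "sample_expect R \<rho> D N G =
     (\<Sum>ys\<in>{..<N} \<rightarrow>\<^sub>E {..<R}. (\<Prod>j<N. \<rho> (ys j)) *
        (\<integral>xs. G xs ys \<partial>(PiM {..<N} (\<lambda>j. D (ys j)))))"

end

theory Submission
  imports Defs
begin

text \<open>
  Conditionally on the labels, the expected loss of a tuple \<open>(a, b, c)\<close> in \<open>\<Omega>\<^sub>r\<^sup>\<pi>\<close> depends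
  only on the labels of the negatives \<open>c\<close>, which lie outside \<open>I\<^sub>\<pi>\<close>, whereas the weight
  \<open>\<omega>\<^sub>r\<^sup>\<pi>\<close> depends only on the labels inside \<open>I\<^sub>\<pi>\<close>. Averaging over the labels therefore
  factorizes: \<open>E[\<omega>\<^sub>r\<^sup>\<pi> U(\<Omega>\<^sub>r\<^sup>\<pi>)] = E[\<omega>\<^sub>r\<^sup>\<pi>] L\<^sub>r\<close>, where \<open>L\<^sub>r\<close> is the risk of class \<open>r\<close> with
  negatives drawn from the mixture, and \<open>L\<^sub>\<Omega> = \<Sum>\<^sub>r \<rho>\<^sub>r L\<^sub>r\<close>.
  Since \<open>m div 2\<close> lies between \<open>(m - 1)/2\<close> and \<open>m/2\<close> and the class counts \<open>n\<^sub>r\<^sup>\<pi>\<close> add up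
  to \<open>n\<close>, we have \<open>(n\<^sub>r\<^sup>\<pi> - 1)/n \<le> \<omega>\<^sub>r\<^sup>\<pi> \<le> n\<^sub>r\<^sup>\<pi>/(n - R)\<close>; with \<open>E[n\<^sub>r\<^sup>\<pi>] = n \<rho>\<^sub>r\<close> this gives
  \<open>\<rho>\<^sub>r - 1/n \<le> E[\<omega>\<^sub>r\<^sup>\<pi>] \<le> n \<rho>\<^sub>r/(n - R)\<close>, hence both bounds. The limit follows by squeezing
  as \<open>n \<rightarrow> \<infinity>\<close>.
\<close>

section \<open>Finite weighted sums of measures\<close>

definition weighted_sum_measure ::
  "'a measure \<Rightarrow> 't set \<Rightarrow> ('t \<Rightarrow> ennreal) \<Rightarrow> ('t \<Rightarrow> 'a measure) \<Rightarrow> 'a measure" where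
  "weighted_sum_measure M T w \<mu> = measure_of (space M) (sets M) (\<lambda>A. \<Sum>t\<in>T. w t * emeasure (\<mu> t) A)"

lemma
  shows sets_weighted_sum_measure [simp]: "sets (weighted_sum_measure M T w \<mu>) = sets M"
    and space_weighted_sum_measure [simp]: "space (weighted_sum_measure M T w \<mu>) = space M"
  by (simp_all add: weighted_sum_measure_def sets.space_closed)

lemma emeasure_weighted_sum_measure:
  assumes sets: "\<And>t. t \<in> T \<Longrightarrow> sets (\<mu> t) = sets M" and A: "A \<in> sets M"
  shows "emeasure (weighted_sum_measure M T w \<mu>) A = (\<Sum>t\<in>T. w t * emeasure (\<mu> t) A)"
  unfolding weighted_sum_measure_def
proof (rule emeasure_measure_of_sigma[OF sets.sigma_algebra_axioms _ _ A])
  show "positive (sets M) (\<lambda>A. \<Sum>t\<in>T. w t * emeasure (\<mu> t) A)"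
    by (auto simp: positive_def)
  show "countably_additive (sets M) (\<lambda>A. \<Sum>t\<in>T. w t * emeasure (\<mu> t) A)"
  proof (rule countably_additiveI)
    fix F :: "nat \<Rightarrow> _"
    assume F: "range F \<subseteq> sets M" "disjoint_family F" "\<Union> (range F) \<in> sets M"
    have "(\<Sum>i. \<Sum>t\<in>T. w t * emeasure (\<mu> t) (F i)) = (\<Sum>t\<in>T. w t * (\<Sum>i. emeasure (\<mu> t) (F i)))"
      by (simp add: suminf_sum ennreal_suminf_cmult)
    also have "\<dots> = (\<Sum>t\<in>T. w t * emeasure (\<mu> t) (\<Union> (range F)))"
      using F sets by (intro sum.cong refl arg_cong2[where f = "(*)"] suminf_emeasure) auto
    finally show "(\<Sum>i. \<Sum>t\<in>T. w t * emeasure (\<mu> t) (F i))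
        = (\<Sum>t\<in>T. w t * emeasure (\<mu> t) (\<Union> (range F)))" .
  qed
qed

lemma nn_integral_weighted_sum_measure:
  assumes sets: "\<And>t. t \<in> T \<Longrightarrow> sets (\<mu> t) = sets M" and g: "g \<in> borel_measurable M"
  shows "integral\<^sup>N (weighted_sum_measure M T w \<mu>) g = (\<Sum>t\<in>T. w t * integral\<^sup>N (\<mu> t) g)"
  using g
proof induct
  case (cong g h)
  have "integral\<^sup>N \<nu> g = integral\<^sup>N \<nu> h" if "sets \<nu> = sets M" for \<nu>
    using cong sets_eq_imp_space_eq[OF that] by (intro nn_integral_cong) simp
  then show ?case
    using cong sets by (simp cong: sum.cong)
next
  case (set A)
  then show ?case
    using sets by (simp add: emeasure_weighted_sum_measure cong: sum.cong)
next
  case (mult u c)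
  then show ?case
    using sets by (simp add: nn_integral_cmult sum_distrib_left mult_ac cong: measurable_cong_sets sum.cong)
next
  case (add u v)
  then show ?case
    using sets by (simp add: nn_integral_add sum.distrib distrib_left cong: measurable_cong_sets sum.cong)
next
  case (seq U)
  have mono: "incseq (\<lambda>i. w t * integral\<^sup>N (\<mu> t) (U i))" for t
    using seq by (auto simp: incseq_def le_fun_def intro!: mult_left_mono nn_integral_mono)
  have SUP: "integral\<^sup>N \<nu> (\<Squnion> (range U)) = (SUP i. integral\<^sup>N \<nu> (U i))"
    if "sets \<nu> = sets M" for \<nu>
    using seq that by (subst nn_integral_monotone_convergence_SUP[symmetric])
      (auto cong: measurable_cong_sets simp: SUP_apply[abs_def])
  have "integral\<^sup>N (weighted_sum_measure M T w \<mu>) (\<Squnion> (range U))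
      = (SUP i. \<Sum>t\<in>T. w t * integral\<^sup>N (\<mu> t) (U i))"
    using seq by (simp add: SUP)
  also have "\<dots> = (\<Sum>t\<in>T. w t * integral\<^sup>N (\<mu> t) (\<Squnion> (range U)))"
    using sets by (simp add: ennreal_SUP_sum[OF mono] SUP_mult_left_ennreal SUP cong: sum.cong)
  finally show ?case .
qed

section \<open>Integrals over product measures\<close>

lemma borel_measurable_vec_lambda:
  fixes g :: "'k::finite \<Rightarrow> 'b \<Rightarrow> real"
  assumes "\<And>i. g i \<in> borel_measurable N"
  shows "(\<lambda>x. \<chi> i. g i x) \<in> borel_measurable N"
proof (subst borel_measurable_euclidean_space, intro ballI)
  fix b :: "real^'k" assume "b \<in> Basis"
  then obtain j where "b = axis j 1" by (auto simp: Basis_vec_def)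
  then have "(\<lambda>x. (\<chi> i. g i x) \<bullet> b) = g j" by (auto simp: inner_axis)
  then show "(\<lambda>x. (\<chi> i. g i x) \<bullet> b) \<in> borel_measurable N" using assms by simp
qed

lemma measurable_closs:
  fixes \<phi> :: "real^'k \<Rightarrow> real" and f :: "'a \<Rightarrow> real^'d"
  assumes "\<phi> \<in> borel_measurable borel" "f \<in> borel_measurable M"
    and "X \<in> measurable N M" "XP \<in> measurable N M" "\<And>i. (\<lambda>w. XN w i) \<in> measurable N M"
  shows "(\<lambda>w. closs \<phi> f (X w) (XP w) (XN w)) \<in> borel_measurable N"
  unfolding closs_def
  by (rule measurable_compose[OF _ assms(1)], rule borel_measurable_vec_lambda) (use assms in measurable)

lemma product_prob_spaceI:
  assumes "\<And>i. prob_space (M i)"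
  shows "product_prob_space M"
  using assms by (simp add: product_prob_space_def product_prob_space_axioms_def
      product_sigma_finite_def prob_space_imp_sigma_finite)

lemma measurable_comp_PiM:
  assumes "range c \<subseteq> J"
  shows "(\<lambda>x. x \<circ> c) \<in> measurable (PiM J \<mu>) (PiM UNIV (\<lambda>i. \<mu> (c i)))"
proof -
  have "(\<lambda>x i. x (c i)) \<in> measurable (PiM J \<mu>) (PiM UNIV (\<lambda>i. \<mu> (c i)))"
    using assms by (intro measurable_PiM_single')
      (auto simp: space_PiM PiE_iff intro!: measurable_component_singleton)
  then show ?thesis by (simp add: comp_def)
qed

lemma nn_integral_PiM_comp_inj:
  assumes prob: "\<And>j. prob_space (\<mu> j)" and "inj c" "range c \<subseteq> J"
    and g: "g \<in> borel_measurable (PiM UNIV (\<lambda>i. \<mu> (c i)))"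
  shows "(\<integral>\<^sup>+ x. g (x \<circ> c) \<partial>PiM J \<mu>) = integral\<^sup>N (PiM UNIV (\<lambda>i. \<mu> (c i))) g"
proof -
  have comp_eq: "(\<lambda>x. x \<circ> c) = (\<lambda>x. \<lambda>i\<in>UNIV. x (c i))" by (simp add: fun_eq_iff)
  have "distr (PiM J \<mu>) (PiM UNIV (\<lambda>i. \<mu> (c i))) (\<lambda>x. \<lambda>i\<in>UNIV. x (c i))
      = PiM UNIV (\<lambda>i. \<mu> (c i))"
    using assms by (intro distr_PiM_reindex) (auto simp: inj_on_def)
  then have "distr (PiM J \<mu>) (PiM UNIV (\<lambda>i. \<mu> (c i))) (\<lambda>x. x \<circ> c) = PiM UNIV (\<lambda>i. \<mu> (c i))"
    unfolding comp_eq .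
  then show ?thesis
    using g measurable_comp_PiM[OF assms(3)] by (metis nn_integral_distr)
qed

lemma nn_integral_PiM_insert_coordinate:
  assumes prob: "\<And>j. prob_space (\<mu> j)" and J: "finite J" "i \<notin> J"
    and g: "(\<lambda>x. g (x i) x) \<in> borel_measurable (PiM (insert i J) \<mu>)"
    and indep: "\<And>x y z. g y (x(i := z)) = g y x"
  shows "(\<integral>\<^sup>+ x. g (x i) x \<partial>PiM (insert i J) \<mu>) = (\<integral>\<^sup>+ y. (\<integral>\<^sup>+ x. g y x \<partial>PiM J \<mu>) \<partial>\<mu> i)"
proof -
  interpret product_prob_space \<mu>
    using prob by (rule product_prob_spaceI)
  show ?thesis
    using product_nn_integral_insert_rev[OF J g] by (simp add: indep)
qed

lemma nn_integral_pair_pair_measure: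
  assumes B: "prob_space B" and C: "prob_space C"
    and h: "h \<in> borel_measurable (A \<Otimes>\<^sub>M (B \<Otimes>\<^sub>M C))"
  shows "integral\<^sup>N (A \<Otimes>\<^sub>M (B \<Otimes>\<^sub>M C)) h = (\<integral>\<^sup>+ x. \<integral>\<^sup>+ y. \<integral>\<^sup>+ z. h (x, y, z) \<partial>C \<partial>B \<partial>A)"
proof -
  interpret B: prob_space B by (rule B)
  interpret C: prob_space C by (rule C)
  interpret BC: pair_prob_space B C ..
  have "integral\<^sup>N (A \<Otimes>\<^sub>M (B \<Otimes>\<^sub>M C)) h = (\<integral>\<^sup>+ x. \<integral>\<^sup>+ q. h (x, q) \<partial>(B \<Otimes>\<^sub>M C) \<partial>A)"
    using h by (rule sigma_finite_measure.nn_integral_fst[OF prob_space_imp_sigma_finite[OF BC.prob_space_axioms], symmetric])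
  also have "\<dots> = (\<integral>\<^sup>+ x. \<integral>\<^sup>+ y. \<integral>\<^sup>+ z. h (x, y, z) \<partial>C \<partial>B \<partial>A)"
  proof (rule nn_integral_cong)
    fix x assume "x \<in> space A"
    with h have "(\<lambda>q. h (x, q)) \<in> borel_measurable (B \<Otimes>\<^sub>M C)" by measurable
    then show "(\<integral>\<^sup>+ q. h (x, q) \<partial>(B \<Otimes>\<^sub>M C)) = (\<integral>\<^sup>+ y. \<integral>\<^sup>+ z. h (x, y, z) \<partial>C \<partial>B)"
      by (simp add: C.nn_integral_fst[symmetric])
  qed
  finally show ?thesis .
qed

lemma nn_integral_PiM_pick:
  assumes prob: "\<And>j. prob_space (\<mu> j)" and sets: "\<And>j. sets (\<mu> j) = sets M"
    and J: "finite J" "a \<in> J" "b \<in> J" "a \<noteq> b" and c: "range c \<subseteq> J - {a, b}" "inj c"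
    and g: "g \<in> borel_measurable (M \<Otimes>\<^sub>M (M \<Otimes>\<^sub>M PiM UNIV (\<lambda>_. M)))"
  shows "(\<integral>\<^sup>+ x. g (x a, x b, x \<circ> c) \<partial>PiM J \<mu>)
       = integral\<^sup>N (\<mu> a \<Otimes>\<^sub>M (\<mu> b \<Otimes>\<^sub>M PiM UNIV (\<lambda>i. \<mu> (c i)))) g"
proof -
  let ?P = "PiM UNIV (\<lambda>i. \<mu> (c i))"
  have P: "prob_space ?P" using prob by (intro prob_space_PiM) auto
  have "sets (\<mu> a \<Otimes>\<^sub>M (\<mu> b \<Otimes>\<^sub>M ?P)) = sets (M \<Otimes>\<^sub>M (M \<Otimes>\<^sub>M PiM UNIV (\<lambda>_. M)))"
    by (intro sets_pair_measure_cong sets_PiM_cong) (auto simp: sets)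
  with g have g': "g \<in> borel_measurable (\<mu> a \<Otimes>\<^sub>M (\<mu> b \<Otimes>\<^sub>M ?P))"
    by (simp cong: measurable_cong_sets)
  define J' where "J' = J - {a, b}"
  have J': "J = insert a (insert b J')" "a \<notin> insert b J'" "b \<notin> J'" "finite J'" "range c \<subseteq> J'"
    using J c by (auto simp: J'_def)
  have [measurable]: "(\<lambda>x. x \<circ> c) \<in> measurable (PiM K \<mu>) ?P" if "range c \<subseteq> K" for K
    using measurable_comp_PiM[OF that] .
  note [measurable] = g'
  have upd: "(x(i := z)) \<circ> c = x \<circ> c" if "i \<in> {a, b}" for i x z
    using that c by (auto simp: fun_eq_iff)
  have "(\<integral>\<^sup>+ x. g (x a, x b, x \<circ> c) \<partial>PiM J \<mu>)
      = (\<integral>\<^sup>+ y. (\<integral>\<^sup>+ x. g (y, x b, x \<circ> c) \<partial>PiM (insert b J') \<mu>) \<partial>\<mu> a)"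
  proof -
    have "range c \<subseteq> J" using c by auto
    with J have "(\<lambda>x. g (x a, x b, x \<circ> c)) \<in> borel_measurable (PiM J \<mu>)"
      by measurable
    then show ?thesis
      unfolding J'(1) using J' J by (intro nn_integral_PiM_insert_coordinate[OF prob]) (auto simp: upd)
  qed
  also have "\<dots> = (\<integral>\<^sup>+ y. (\<integral>\<^sup>+ z. (\<integral>\<^sup>+ x. g (y, z, x \<circ> c) \<partial>PiM J' \<mu>) \<partial>\<mu> b) \<partial>\<mu> a)"
  proof (intro nn_integral_cong nn_integral_PiM_insert_coordinate[OF prob])
    fix y assume "y \<in> space (\<mu> a)"
    moreover have "range c \<subseteq> insert b J'" using J' by auto
    ultimately show "(\<lambda>x. g (y, x b, x \<circ> c)) \<in> borel_measurable (PiM (insert b J') \<mu>)"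
      by measurable
  qed (use J' in \<open>auto simp: upd\<close>)
  also have "\<dots> = (\<integral>\<^sup>+ y. (\<integral>\<^sup>+ z. (\<integral>\<^sup>+ w. g (y, z, w) \<partial>?P) \<partial>\<mu> b) \<partial>\<mu> a)"
    using J' c g' by (intro nn_integral_cong nn_integral_PiM_comp_inj[OF prob]) auto
  also have "\<dots> = integral\<^sup>N (\<mu> a \<Otimes>\<^sub>M (\<mu> b \<Otimes>\<^sub>M ?P)) g"
    using g' by (rule nn_integral_pair_pair_measure[OF prob P, symmetric])
  finally show ?thesis .
qed

lemma nn_integral_pair_pair_measure_Fubini:
  assumes A: "prob_space A" and Q: "prob_space Q"
    and h: "h \<in> borel_measurable (A \<Otimes>\<^sub>M (A \<Otimes>\<^sub>M Q))"
  shows "integral\<^sup>N (A \<Otimes>\<^sub>M (A \<Otimes>\<^sub>M Q)) h = (\<integral>\<^sup>+ w. \<integral>\<^sup>+ x. \<integral>\<^sup>+ y. h (x, y, w) \<partial>A \<partial>A \<partial>Q)"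
proof -
  interpret A: prob_space A by (rule A)
  interpret Q: prob_space Q by (rule Q)
  interpret AQ: pair_prob_space A Q ..
  have "integral\<^sup>N (A \<Otimes>\<^sub>M (A \<Otimes>\<^sub>M Q)) h = (\<integral>\<^sup>+ x. \<integral>\<^sup>+ y. \<integral>\<^sup>+ w. h (x, y, w) \<partial>Q \<partial>A \<partial>A)"
    by (rule nn_integral_pair_pair_measure[OF A Q h])
  also have "\<dots> = (\<integral>\<^sup>+ x. \<integral>\<^sup>+ w. \<integral>\<^sup>+ y. h (x, y, w) \<partial>A \<partial>Q \<partial>A)"
  proof (rule nn_integral_cong)
    fix x assume "x \<in> space A"
    with h have "(\<lambda>(y, w). h (x, y, w)) \<in> borel_measurable (A \<Otimes>\<^sub>M Q)" by measurable
    then show "(\<integral>\<^sup>+ y. \<integral>\<^sup>+ w. h (x, y, w) \<partial>Q \<partial>A) = (\<integral>\<^sup>+ w. \<integral>\<^sup>+ y. h (x, y, w) \<partial>A \<partial>Q)"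
      by (rule AQ.Fubini'[symmetric])
  qed
  also have "\<dots> = (\<integral>\<^sup>+ w. \<integral>\<^sup>+ x. \<integral>\<^sup>+ y. h (x, y, w) \<partial>A \<partial>A \<partial>Q)"
  proof (rule AQ.Fubini'[symmetric])
    show "(\<lambda>(x, w). \<integral>\<^sup>+ y. h (x, y, w) \<partial>A) \<in> borel_measurable (A \<Otimes>\<^sub>M Q)"
      using h by measurable
  qed
  finally show ?thesis .
qed

section \<open>Sums over label vectors\<close>

lemma sum_PiE_merge:
  assumes "finite X" "finite Y" "X \<inter> Y = {}"
  shows "(\<Sum>y\<in>(X \<union> Y) \<rightarrow>\<^sub>E A. F y) = (\<Sum>u\<in>X \<rightarrow>\<^sub>E A. \<Sum>v\<in>Y \<rightarrow>\<^sub>E A. F (merge X Y (u, v)))"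
proof -
  have "(\<Sum>u\<in>X \<rightarrow>\<^sub>E A. \<Sum>v\<in>Y \<rightarrow>\<^sub>E A. F (merge X Y (u, v)))
      = (\<Sum>(u, v)\<in>(X \<rightarrow>\<^sub>E A) \<times> (Y \<rightarrow>\<^sub>E A). F (merge X Y (u, v)))"
    by (rule sum.cartesian_product)
  also have "\<dots> = (\<Sum>y\<in>(X \<union> Y) \<rightarrow>\<^sub>E A. F y)"
    using assms
    by (intro sum.reindex_bij_witness[of _ "\<lambda>y. (restrict y X, restrict y Y)" "merge X Y"])
      (auto simp: merge_def PiE_iff extensional_def fun_eq_iff split: if_splits)
  finally show ?thesis ..
qed

lemma sum_PiE_prod_eq_1:
  fixes p :: "'b \<Rightarrow> real"
  assumes "finite J" "finite A" "(\<Sum>r\<in>A. p r) = 1"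
  shows "(\<Sum>ys\<in>J \<rightarrow>\<^sub>E A. \<Prod>j\<in>J. p (ys j)) = 1"
  using prod_sum_PiE[of J "\<lambda>_. A" "\<lambda>_ r. p r"] assms by simp

lemma sum_PiE_prod_indicator:
  fixes p :: "'b \<Rightarrow> real"
  assumes J: "finite J" "j \<in> J" and A: "finite A" "r \<in> A" and p: "(\<Sum>r\<in>A. p r) = 1"
  shows "(\<Sum>ys\<in>J \<rightarrow>\<^sub>E A. (\<Prod>i\<in>J. p (ys i)) * (if ys j = r then 1 else 0)) = p r"
proof -
  define q where "q i r' = (if i = j \<and> r' \<noteq> r then 0 else p r')" for i r'
  have "(\<Prod>i\<in>J. q i (ys i)) = (\<Prod>i\<in>J. p (ys i)) * (if ys j = r then 1 else 0)" for ys
    using J by (auto simp: q_def intro!: prod.cong)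
  moreover have "(\<Sum>r'\<in>A. q i r') = (if i = j then p r else 1)" for i
  proof (cases "i = j")
    case True
    then have "(\<Sum>r'\<in>A. q i r') = (\<Sum>r'\<in>A. if r' = r then p r' else 0)"
      by (intro sum.cong) (auto simp: q_def)
    with True A show ?thesis by simp
  qed (use p in \<open>simp add: q_def\<close>)
  ultimately show ?thesis
    using prod_sum_PiE[of J "\<lambda>_. A" q] J A by simp
qed

lemma sum_PiE_prod_comp_inj:
  fixes c :: "'k::finite \<Rightarrow> 'j" and p :: "'b \<Rightarrow> real"
  assumes c: "inj c"
  shows "(\<Sum>u\<in>range c \<rightarrow>\<^sub>E A. (\<Prod>j\<in>range c. p (u j)) * h (u \<circ> c))
       = (\<Sum>s\<in>UNIV \<rightarrow>\<^sub>E A. (\<Prod>i\<in>UNIV. p (s i)) * h s)"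
proof (rule sum.reindex_bij_witness[of _ "\<lambda>s. \<lambda>j\<in>range c. s (inv c j)" "\<lambda>u. u \<circ> c"])
  fix u assume u: "u \<in> range c \<rightarrow>\<^sub>E A"
  show "(\<lambda>j\<in>range c. (u \<circ> c) (inv c j)) = u"
    using u c by (auto simp: fun_eq_iff PiE_iff extensional_def)
  show "u \<circ> c \<in> UNIV \<rightarrow>\<^sub>E A" using u by (auto simp: PiE_iff)
  show "(\<Prod>i\<in>UNIV. p ((u \<circ> c) i)) * h (u \<circ> c) = (\<Prod>j\<in>range c. p (u j)) * h (u \<circ> c)"
    using c by (simp add: prod.reindex)
next
  fix s :: "'k \<Rightarrow> _" assume s: "s \<in> UNIV \<rightarrow>\<^sub>E A"
  show "(\<lambda>j\<in>range c. s (inv c j)) \<circ> c = s" using c by (auto simp: fun_eq_iff)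
  show "(\<lambda>j\<in>range c. s (inv c j)) \<in> range c \<rightarrow>\<^sub>E A" using s by (auto simp: PiE_iff)
qed

lemma sum_PiE_prod_factor:
  fixes c :: "'k::finite \<Rightarrow> 'j" and p :: "'b \<Rightarrow> real"
  assumes J: "finite J" and A: "finite A" "(\<Sum>r\<in>A. p r) = 1" and c: "inj c" "range c \<subseteq> J"
    and g: "\<And>ys ys'. (\<And>j. j \<in> J - range c \<Longrightarrow> ys j = ys' j) \<Longrightarrow> g ys = g ys'"
  shows "(\<Sum>ys\<in>J \<rightarrow>\<^sub>E A. (\<Prod>j\<in>J. p (ys j)) * g ys * h (ys \<circ> c))
       = (\<Sum>ys\<in>J \<rightarrow>\<^sub>E A. (\<Prod>j\<in>J. p (ys j)) * g ys) * (\<Sum>s\<in>UNIV \<rightarrow>\<^sub>E A. (\<Prod>i\<in>UNIV. p (s i)) * h s)"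
proof -
  let ?X = "range c" and ?Y = "J - range c"
  have XY: "finite ?X" "finite ?Y" "?X \<inter> ?Y = {}" and J_eq: "?X \<union> ?Y = J" using J c by auto
  let ?m = "\<lambda>u v. merge ?X ?Y (u, v)"
  have split: "(\<Sum>ys\<in>J \<rightarrow>\<^sub>E A. F ys) = (\<Sum>u\<in>?X \<rightarrow>\<^sub>E A. \<Sum>v\<in>?Y \<rightarrow>\<^sub>E A. F (?m u v))" for F
    using sum_PiE_merge[OF XY, where A = A and F = F] by (simp only: J_eq)
  have p_merge: "(\<Prod>j\<in>J. p (?m u v j)) = (\<Prod>j\<in>?X. p (u j)) * (\<Prod>j\<in>?Y. p (v j))" for u v
    using prod.union_disjoint[OF XY, of "\<lambda>j. p (?m u v j)"]
    by (simp only: J_eq) (auto simp: merge_def intro!: arg_cong2[where f = "(*)"] prod.cong)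
  have g_merge: "g (?m u v) = g v" for u v by (rule g) (auto simp: merge_def)
  have h_merge: "?m u v \<circ> c = u \<circ> c" for u v by (auto simp: merge_def fun_eq_iff)
  define G where "G = (\<Sum>v\<in>?Y \<rightarrow>\<^sub>E A. (\<Prod>j\<in>?Y. p (v j)) * g v)"
  have "(\<Sum>ys\<in>J \<rightarrow>\<^sub>E A. (\<Prod>j\<in>J. p (ys j)) * g ys * h (ys \<circ> c))
      = (\<Sum>u\<in>?X \<rightarrow>\<^sub>E A. (\<Prod>j\<in>?X. p (u j)) * h (u \<circ> c)) * G"
    unfolding split p_merge g_merge h_merge G_def sum_product
    by (intro sum.cong refl) (simp add: mult_ac)
  moreover have "(\<Sum>ys\<in>J \<rightarrow>\<^sub>E A. (\<Prod>j\<in>J. p (ys j)) * g ys) = (\<Sum>u\<in>?X \<rightarrow>\<^sub>E A. \<Prod>j\<in>?X. p (u j)) * G"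
    unfolding split p_merge g_merge G_def sum_product
    by (intro sum.cong refl) (simp add: mult_ac)
  ultimately show ?thesis
    using sum_PiE_prod_eq_1[OF XY(1) A] by (simp add: sum_PiE_prod_comp_inj[OF c(1)])
qed

section \<open>Index sets and weights of the estimator\<close>

lemma half_size_le: "half_size k N \<le> N"
proof -
  have "N div (k + 2) \<le> N div 2" by (rule div_le_mono2) auto
  then show ?thesis unfolding half_size_def by linarith
qed

lemma half_size_add_le:
  assumes "0 < half_size k N"
  shows "half_size k N + k \<le> N"
proof -
  define q where "q = N div (k + 2)"
  have "q \<ge> 1" using assms by (simp add: half_size_def q_def)
  then have "2 * q + k \<le> q * (k + 2)" by (simp add: algebra_simps)
  also have "\<dots> \<le> N" unfolding q_def by (rule div_times_less_eq_dividend)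
  finally show ?thesis by (simp add: half_size_def q_def)
qed

lemma half_size_tendsto_at_top: "filterlim (\<lambda>N. real (half_size k N)) at_top sequentially"
proof (rule filterlim_at_top_mono)
  show "filterlim (\<lambda>N. real (N div (k + 2))) at_top sequentially"
    by (rule filterlim_compose[OF filterlim_real_sequentially filterlim_at_top_div_const_nat]) simp
qed (simp add: half_size_def)

lemma finite_Ipi [simp]: "finite (Ipi k N \<pi>)"
  by (simp add: Ipi_def)

lemma Ipi_subset:
  assumes "\<pi> permutes {..<N}"
  shows "Ipi k N \<pi> \<subseteq> {..<N}"
proof
  fix j assume "j \<in> Ipi k N \<pi>"
  then obtain i where "i < half_size k N" "j = \<pi> i" by (auto simp: Ipi_def)
  with half_size_le[of k N] show "j \<in> {..<N}"
    using permutes_in_image[OF assms, of i] by simp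
qed

lemma card_Ipi:
  assumes "\<pi> permutes {..<N}"
  shows "card (Ipi k N \<pi>) = half_size k N"
proof -
  have "inj_on \<pi> {..<half_size k N}"
    using permutes_inj[OF assms] by (rule inj_on_subset) simp
  then show ?thesis unfolding Ipi_def by (simp add: card_image)
qed

lemma sum_npi:
  assumes "\<And>j. j \<in> Ipi k N \<pi> \<Longrightarrow> ys j < R"
  shows "(\<Sum>q<R. npi k N ys \<pi> q) = card (Ipi k N \<pi>)"
proof -
  have "Ipi k N \<pi> = (\<Union>q<R. {j \<in> Ipi k N \<pi>. ys j = q})" using assms by auto
  moreover have "card (\<Union>q<R. {j \<in> Ipi k N \<pi>. ys j = q}) = (\<Sum>q<R. card {j \<in> Ipi k N \<pi>. ys j = q})"
    by (rule card_UN_disjoint) auto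
  ultimately show ?thesis unfolding npi_def by simp
qed

lemma half_share_bounds:
  fixes m :: "'q \<Rightarrow> nat"
  assumes Q: "finite Q" "(\<Sum>q\<in>Q. m q) = n" "card Q < n"
  defines "h \<equiv> \<Sum>q\<in>Q. m q div 2"
  shows "0 < h"
    and "real (m r div 2) / real h \<le> real (m r) / (real n - real (card Q))"
    and "(real (m r) - 1) / real n \<le> real (m r div 2) / real h"
proof -
  have floor_half: "real x - 1 \<le> 2 * real (x div 2)" "2 * real (x div 2) \<le> real x" for x :: nat
    by linarith+
  have "real n - real (card Q) = (\<Sum>q\<in>Q. real (m q) - 1)"
    using Q by (simp add: sum_subtractf flip: Q(2))
  also have "\<dots> \<le> 2 * real h"
    unfolding h_def by (simp add: sum_distrib_left sum_mono floor_half(1))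
  finally have h_lower: "real n - real (card Q) \<le> 2 * real h" .
  have "2 * real h \<le> (\<Sum>q\<in>Q. real (m q))"
    unfolding h_def by (simp add: sum_distrib_left sum_mono floor_half(2))
  then have h_upper: "2 * real h \<le> real n"
    by (simp flip: Q(2))
  have gap: "real n - real (card Q) > 0" using Q(3) by simp
  with h_lower have h_pos: "real h > 0" by linarith
  then show "0 < h" by simp
  have "real (m r div 2) * (real n - real (card Q)) \<le> (real (m r) / 2) * (2 * real h)"
    using floor_half(2)[of "m r"] h_lower gap by (intro mult_mono) auto
  then show "real (m r div 2) / real h \<le> real (m r) / (real n - real (card Q))"
    using h_pos gap by (simp add: divide_simps mult.commute)
  have "(real (m r) - 1) * real h \<le> real (m r div 2) * real n"
  proof (cases "m r = 0")
    case False
    then have "(real (m r) - 1) * real h \<le> (2 * real (m r div 2)) * (real n / 2)"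
      using floor_half(1)[of "m r"] h_upper h_pos by (intro mult_mono) auto
    then show ?thesis by simp
  qed (use h_pos in simp)
  then show "(real (m r) - 1) / real n \<le> real (m r div 2) / real h"
    using h_pos gap by (simp add: divide_simps mult.commute)
qed

definition pos_pairs :: "nat \<Rightarrow> nat \<Rightarrow> (nat \<Rightarrow> nat) \<Rightarrow> (nat \<Rightarrow> nat) \<Rightarrow> nat \<Rightarrow> (nat \<times> nat) set" where
  "pos_pairs k N ys \<pi> r =
     {(a, b). a \<in> Ipi k N \<pi> \<and> b \<in> Ipi k N \<pi> \<and> a \<noteq> b \<and> ys a = r \<and> ys b = r}"

definition neg_tuples :: "nat \<Rightarrow> (nat \<Rightarrow> nat) \<Rightarrow> ('k::finite \<Rightarrow> nat) set" where
  "neg_tuples N \<pi> = {c. inj c \<and> range c \<subseteq> {..<N} - Ipi CARD('k) N \<pi>}"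

lemma Omega_pi_eq_pos_pairs_times_neg_tuples:
  "(Omega_pi N ys \<pi> r :: (nat \<times> nat \<times> ('k::finite \<Rightarrow> nat)) set)
    = (\<lambda>((a, b), c). (a, b, c)) ` (pos_pairs CARD('k) N ys \<pi> r \<times> neg_tuples N \<pi>)"
  by (auto simp: Omega_pi_def pos_pairs_def neg_tuples_def Let_def image_iff)

lemma Omega_pi_memD:
  assumes "\<pi> permutes {..<N}" "t \<in> (Omega_pi N ys \<pi> r :: (nat \<times> nat \<times> ('k::finite \<Rightarrow> nat)) set)"
  shows "fst t \<in> {..<N}" "fst (snd t) \<in> {..<N}" "range (snd (snd t)) \<subseteq> {..<N}"
    and "fst t \<noteq> fst (snd t)" "range (snd (snd t)) \<subseteq> {..<N} - {fst t, fst (snd t)}" "inj (snd (snd t))"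
  using assms(2) Ipi_subset[OF assms(1), of "CARD('k)"] by (auto simp: Omega_pi_def Let_def)

lemma finite_pos_pairs [simp]: "finite (pos_pairs k N ys \<pi> r)"
  by (rule finite_subset[of _ "Ipi k N \<pi> \<times> Ipi k N \<pi>"]) (auto simp: pos_pairs_def)

lemma finite_neg_tuples [simp]: "finite (neg_tuples N \<pi>)"
  by (rule finite_subset[of _ "UNIV \<rightarrow>\<^sub>E {..<N}"]) (auto simp: neg_tuples_def PiE_iff finite_PiE)

lemma neg_tuples_nonempty:
  assumes "\<pi> permutes {..<N}" "0 < half_size CARD('k::finite) N"
  shows "(neg_tuples N \<pi> :: ('k \<Rightarrow> nat) set) \<noteq> {}"
proof -
  let ?C = "{..<N} - Ipi CARD('k) N \<pi>"
  have "card ?C = N - half_size CARD('k) N"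
    using Ipi_subset[OF assms(1)] card_Ipi[OF assms(1)] by (simp add: card_Diff_subset)
  then have "card (UNIV :: 'k set) \<le> card ?C"
    using half_size_add_le[OF assms(2)] by simp
  then obtain c :: "'k \<Rightarrow> nat" where "c ` UNIV \<subseteq> ?C" "inj c"
    using card_le_inj[of "UNIV :: 'k set" ?C] by auto
  then show ?thesis by (auto simp: neg_tuples_def)
qed

lemma omega_w_cong:
  assumes "\<And>j. j \<in> Ipi k N \<pi> \<Longrightarrow> ys j = ys' j"
  shows "omega_w R k N ys \<pi> r = omega_w R k N ys' \<pi> r"
proof -
  have "npi k N ys \<pi> q = npi k N ys' \<pi> q" for q
    unfolding npi_def using assms by (metis (lifting) mem_Collect_eq Collect_cong)
  then show ?thesis unfolding omega_w_def by simp
qed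

lemma omega_w_eq_0_if_no_pos_pairs:
  assumes "pos_pairs k N ys \<pi> r = {}"
  shows "omega_w R k N ys \<pi> r = 0"
proof -
  have "card {j \<in> Ipi k N \<pi>. ys j = r} \<le> Suc 0"
    using assms by (subst card_le_Suc0_iff_eq) (auto simp: pos_pairs_def)
  then show ?thesis by (simp add: omega_w_def npi_def Let_def)
qed

lemma omega_w_bounds:
  assumes "\<pi> permutes {..<N}" "R < half_size k N" "\<And>j. j \<in> Ipi k N \<pi> \<Longrightarrow> ys j < R"
  shows "omega_w R k N ys \<pi> r \<le> real (npi k N ys \<pi> r) / (real (half_size k N) - real R)"
    and "(real (npi k N ys \<pi> r) - 1) / real (half_size k N) \<le> omega_w R k N ys \<pi> r"
proof -
  have sum: "(\<Sum>q<R. npi k N ys \<pi> q) = half_size k N"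
    using sum_npi[OF assms(3)] card_Ipi[OF assms(1)] by simp
  note bounds = half_share_bounds[OF _ sum, simplified, OF assms(2)]
  then have "omega_w R k N ys \<pi> r = real (npi k N ys \<pi> r div 2) / real (\<Sum>q<R. npi k N ys \<pi> q div 2)"
    by (simp add: omega_w_def Let_def)
  with bounds show "omega_w R k N ys \<pi> r \<le> real (npi k N ys \<pi> r) / (real (half_size k N) - real R)"
    and "(real (npi k N ys \<pi> r) - 1) / real (half_size k N) \<le> omega_w R k N ys \<pi> r"
    by simp_all
qed

section \<open>Mixtures and the contrastive risk\<close>

locale label_mixture =
  fixes M :: "'a measure" and R :: nat and \<rho> :: "nat \<Rightarrow> real" and D :: "nat \<Rightarrow> 'a measure"
  assumes rho_pos: "\<And>r. r < R \<Longrightarrow> 0 < \<rho> r"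
    and rho_sum: "(\<Sum>r<R. \<rho> r) = 1"
    and prob_space_D: "\<And>r. prob_space (D r)"
    and sets_D: "\<And>r. sets (D r) = sets M"
begin

abbreviation "mix \<equiv> mixture M R \<rho> D"

lemma mixture_eq_weighted_sum_measure: "mix = weighted_sum_measure M {..<R} (\<lambda>r. ennreal (\<rho> r)) D"
  by (simp add: mixture_def weighted_sum_measure_def)

lemma sets_mixture [simp]: "sets mix = sets M"
  by (simp add: mixture_eq_weighted_sum_measure)

lemma space_D: "space (D r) = space M"
  using sets_D by (rule sets_eq_imp_space_eq)

lemma sets_PiM_D: "sets (PiM K (\<lambda>i. D (s i))) = sets (PiM K (\<lambda>_. M))"
  by (rule sets_PiM_cong) (auto simp: sets_D)

lemma prob_space_mixture: "prob_space mix"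
proof
  have "emeasure mix (space mix) = (\<Sum>r<R. ennreal (\<rho> r) * emeasure (D r) (space M))"
    by (simp add: mixture_eq_weighted_sum_measure emeasure_weighted_sum_measure sets_D)
  also have "\<dots> = (\<Sum>r<R. ennreal (\<rho> r))"
    using prob_space.emeasure_space_1[OF prob_space_D] by (simp add: space_D)
  also have "\<dots> = ennreal (\<Sum>r<R. \<rho> r)"
    using rho_pos by (intro sum_ennreal) (simp add: less_imp_le)
  finally show "emeasure mix (space mix) = 1" by (simp add: rho_sum)
qed

lemma PiM_mixture_eq:
  fixes K :: "'i set"
  assumes K: "finite K"
  shows "PiM K (\<lambda>_. mix) = weighted_sum_measure (PiM K (\<lambda>_. M)) (K \<rightarrow>\<^sub>E {..<R})
           (\<lambda>s. ennreal (\<Prod>i\<in>K. \<rho> (s i))) (\<lambda>s. PiM K (\<lambda>i. D (s i)))"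
    (is "_ = ?S")
proof -
  interpret mix: product_prob_space "\<lambda>_ :: 'i. mix"
    using prob_space_mixture by (rule product_prob_spaceI)
  show ?thesis
  proof (rule mix.PiM_eqI[symmetric, OF K])
    show "sets ?S = sets (PiM K (\<lambda>_. mix))"
      by (simp cong: sets_PiM_cong)
    fix A assume A: "\<And>i. i \<in> K \<Longrightarrow> A i \<in> sets mix"
    have "emeasure ?S (PiE K A)
        = (\<Sum>s\<in>K \<rightarrow>\<^sub>E {..<R}. \<Prod>i\<in>K. ennreal (\<rho> (s i)) * emeasure (D (s i)) (A i))"
    proof (subst emeasure_weighted_sum_measure, intro sets_PiM_D)
      show "PiE K A \<in> sets (PiM K (\<lambda>_. M))" using A K by (auto intro!: sets_PiM_I_finite)
      show "(\<Sum>s\<in>K \<rightarrow>\<^sub>E {..<R}. ennreal (\<Prod>i\<in>K. \<rho> (s i)) * emeasure (PiM K (\<lambda>i. D (s i))) (PiE K A))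
          = (\<Sum>s\<in>K \<rightarrow>\<^sub>E {..<R}. \<Prod>i\<in>K. ennreal (\<rho> (s i)) * emeasure (D (s i)) (A i))"
      proof (rule sum.cong[OF refl])
        fix s assume s: "s \<in> K \<rightarrow>\<^sub>E {..<R}"
        interpret Ds: product_prob_space "\<lambda>i. D (s i)"
          using prob_space_D by (rule product_prob_spaceI)
        show "ennreal (\<Prod>i\<in>K. \<rho> (s i)) * emeasure (PiM K (\<lambda>i. D (s i))) (PiE K A)
            = (\<Prod>i\<in>K. ennreal (\<rho> (s i)) * emeasure (D (s i)) (A i))"
          using s A K rho_pos
          by (simp add: Ds.emeasure_PiM sets_D prod.distrib prod_ennreal less_imp_le PiE_iff)
      qed
    qed
    also have "\<dots> = (\<Prod>i\<in>K. \<Sum>r<R. ennreal (\<rho> r) * emeasure (D r) (A i))"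
      using K by (subst prod_sum_PiE) auto
    also have "\<dots> = (\<Prod>i\<in>K. emeasure mix (A i))"
      using A by (simp add: mixture_eq_weighted_sum_measure emeasure_weighted_sum_measure sets_D)
    finally show "emeasure ?S (PiE K A) = (\<Prod>i\<in>K. emeasure mix (A i))" .
  qed
qed

lemma nn_integral_PiM_mixture:
  assumes "finite K" and "g \<in> borel_measurable (PiM K (\<lambda>_. M))"
  shows "integral\<^sup>N (PiM K (\<lambda>_. mix)) g =
     (\<Sum>s\<in>K \<rightarrow>\<^sub>E {..<R}. ennreal (\<Prod>i\<in>K. \<rho> (s i)) * integral\<^sup>N (PiM K (\<lambda>i. D (s i))) g)"
  using assms by (simp add: PiM_mixture_eq nn_integral_weighted_sum_measure sets_PiM_D)

end

locale contrastive_risk = label_mixture M R \<rho> D for M :: "'a measure" and R \<rho> D +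
  fixes \<phi> :: "real^'k \<Rightarrow> real" and f :: "'a \<Rightarrow> real^'d" and B :: real
  assumes phi_measurable: "\<phi> \<in> borel_measurable borel"
    and f_measurable: "f \<in> borel_measurable M"
    and phi_nonneg: "\<And>v. 0 \<le> \<phi> v"
    and closs_le_B: "\<And>x xp xn. x \<in> space M \<Longrightarrow> xp \<in> space M \<Longrightarrow> (\<And>i. xn i \<in> space M) \<Longrightarrow>
      closs \<phi> f x xp xn \<le> B"
begin

definition tuple_loss :: "'a \<times> 'a \<times> ('k \<Rightarrow> 'a) \<Rightarrow> real" where
  "tuple_loss z = closs \<phi> f (fst z) (fst (snd z)) (snd (snd z))"

definition cond_risk :: "nat \<Rightarrow> nat \<Rightarrow> ('k \<Rightarrow> nat) \<Rightarrow> real" where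
  "cond_risk r1 r2 s = (\<integral>z. tuple_loss z \<partial>(D r1 \<Otimes>\<^sub>M (D r2 \<Otimes>\<^sub>M PiM UNIV (\<lambda>i. D (s i)))))"

definition class_risk :: "nat \<Rightarrow> real" where
  "class_risk r = (\<Sum>s\<in>UNIV \<rightarrow>\<^sub>E {..<R}. (\<Prod>i\<in>UNIV. \<rho> (s i)) * cond_risk r r s)"

lemma closs_nonneg: "0 \<le> closs \<phi> f x xp xn"
  by (simp add: closs_def phi_nonneg)

lemma tuple_loss_nonneg: "0 \<le> tuple_loss z"
  by (simp add: tuple_loss_def closs_nonneg)

lemma measurable_tuple_loss:
  assumes "sets A1 = sets M" "sets A2 = sets M" "sets Q = sets (PiM (UNIV :: 'k set) (\<lambda>_. M))"
  shows "tuple_loss \<in> borel_measurable (A1 \<Otimes>\<^sub>M (A2 \<Otimes>\<^sub>M Q))"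
proof -
  have "sets (A1 \<Otimes>\<^sub>M (A2 \<Otimes>\<^sub>M Q)) = sets (M \<Otimes>\<^sub>M (M \<Otimes>\<^sub>M PiM (UNIV :: 'k set) (\<lambda>_. M)))"
    using assms by (intro sets_pair_measure_cong) auto
  moreover have "tuple_loss \<in> borel_measurable (M \<Otimes>\<^sub>M (M \<Otimes>\<^sub>M PiM (UNIV :: 'k set) (\<lambda>_. M)))"
    unfolding tuple_loss_def by (rule measurable_closs[OF phi_measurable f_measurable]) measurable
  ultimately show ?thesis
    by (simp cong: measurable_cong_sets)
qed

lemma integrable_tuple_loss:
  assumes "prob_space A1" "prob_space A2" "prob_space Q"
    and sets: "sets A1 = sets M" "sets A2 = sets M" "sets Q = sets (PiM (UNIV :: 'k set) (\<lambda>_. M))"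
  shows "integrable (A1 \<Otimes>\<^sub>M (A2 \<Otimes>\<^sub>M Q)) tuple_loss"
proof -
  interpret A2Q: pair_prob_space A2 Q
    using assms by (simp add: pair_prob_space_def pair_sigma_finite_def prob_space_imp_sigma_finite)
  interpret P: pair_prob_space A1 "A2 \<Otimes>\<^sub>M Q"
    using assms A2Q.prob_space_axioms
    by (simp add: pair_prob_space_def pair_sigma_finite_def prob_space_imp_sigma_finite)
  have "space Q = space (PiM (UNIV :: 'k set) (\<lambda>_. M))"
    using sets(3) by (rule sets_eq_imp_space_eq)
  then have "AE z in A1 \<Otimes>\<^sub>M (A2 \<Otimes>\<^sub>M Q). norm (tuple_loss z) \<le> B"
    using sets_eq_imp_space_eq[OF sets(1)] sets_eq_imp_space_eq[OF sets(2)]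
    by (auto simp: tuple_loss_def closs_nonneg space_pair_measure space_PiM PiE_iff intro!: closs_le_B)
  then show ?thesis
    using measurable_tuple_loss[OF sets] by (rule P.integrable_const_bound)
qed

lemma nn_integral_tuple_loss:
  assumes "prob_space A1" "prob_space A2" "prob_space Q"
    and "sets A1 = sets M" "sets A2 = sets M" "sets Q = sets (PiM (UNIV :: 'k set) (\<lambda>_. M))"
  shows "(\<integral>\<^sup>+ z. ennreal (tuple_loss z) \<partial>(A1 \<Otimes>\<^sub>M (A2 \<Otimes>\<^sub>M Q))) = ennreal (integral\<^sup>L (A1 \<Otimes>\<^sub>M (A2 \<Otimes>\<^sub>M Q)) tuple_loss)"
  using integrable_tuple_loss[OF assms] tuple_loss_nonneg by (intro nn_integral_eq_integral) auto

lemma cond_risk_nonneg: "0 \<le> cond_risk r1 r2 s"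
  unfolding cond_risk_def by (rule integral_nonneg_AE) (simp add: tuple_loss_nonneg)

lemma class_risk_nonneg: "0 \<le> class_risk r"
  unfolding class_risk_def using rho_pos
  by (intro sum_nonneg mult_nonneg_nonneg prod_nonneg cond_risk_nonneg) (auto intro: less_imp_le)

lemma nn_integral_tuple_loss_negatives_last:
  assumes "prob_space Q" "sets Q = sets (PiM (UNIV :: 'k set) (\<lambda>_. M))"
  shows "(\<integral>\<^sup>+ z. ennreal (tuple_loss z) \<partial>(D r \<Otimes>\<^sub>M (D r \<Otimes>\<^sub>M Q)))
    = (\<integral>\<^sup>+ w. \<integral>\<^sup>+ x. \<integral>\<^sup>+ y. ennreal (tuple_loss (x, y, w)) \<partial>D r \<partial>D r \<partial>Q)"
  using measurable_tuple_loss[OF sets_D sets_D assms(2)]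
  by (intro nn_integral_pair_pair_measure_Fubini[OF prob_space_D assms(1)]) measurable

lemma integral_tuple_loss_mixture:
  "(\<integral>z. tuple_loss z \<partial>(D r \<Otimes>\<^sub>M (D r \<Otimes>\<^sub>M PiM (UNIV :: 'k set) (\<lambda>_. mix)))) = class_risk r"
proof -
  let ?G = "\<lambda>w. \<integral>\<^sup>+ x. \<integral>\<^sup>+ y. ennreal (tuple_loss (x, y, w)) \<partial>D r \<partial>D r"
  have prob_PiM: "prob_space (PiM (UNIV :: 'k set) \<nu>)" if "\<And>i. prob_space (\<nu> i)" for \<nu>
    using that by (intro prob_space_PiM) auto
  have "?G \<in> borel_measurable (PiM (UNIV :: 'k set) (\<lambda>_. M))"
  proof -
    interpret Dr: prob_space "D r" by (rule prob_space_D)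
    note [measurable] = measurable_tuple_loss[OF sets_D sets_D refl]
    show ?thesis by measurable
  qed
  then have "ennreal (\<integral>z. tuple_loss z \<partial>(D r \<Otimes>\<^sub>M (D r \<Otimes>\<^sub>M PiM UNIV (\<lambda>_. mix))))
      = (\<Sum>s\<in>UNIV \<rightarrow>\<^sub>E {..<R}. ennreal (\<Prod>i\<in>UNIV. \<rho> (s i)) * integral\<^sup>N (PiM UNIV (\<lambda>i. D (s i))) ?G)"
    using prob_space_mixture
    by (simp add: nn_integral_tuple_loss[symmetric] prob_space_D prob_PiM sets_D
        nn_integral_tuple_loss_negatives_last nn_integral_PiM_mixture sets_PiM_cong[of UNIV UNIV "\<lambda>_. mix" "\<lambda>_. M"])
  also have "\<dots> = (\<Sum>s\<in>UNIV \<rightarrow>\<^sub>E {..<R}. ennreal ((\<Prod>i\<in>UNIV. \<rho> (s i)) * cond_risk r r s))"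
  proof (rule sum.cong[OF refl])
    fix s :: "'k \<Rightarrow> nat" assume "s \<in> UNIV \<rightarrow>\<^sub>E {..<R}"
    then have "0 \<le> (\<Prod>i\<in>UNIV. \<rho> (s i))"
      using rho_pos by (intro prod_nonneg) (auto simp: PiE_iff less_imp_le)
    moreover have "integral\<^sup>N (PiM UNIV (\<lambda>i. D (s i))) ?G = ennreal (cond_risk r r s)"
      unfolding cond_risk_def
      by (simp add: nn_integral_tuple_loss_negatives_last[symmetric] nn_integral_tuple_loss
          prob_space_D prob_PiM sets_D sets_PiM_D)
    ultimately show "ennreal (\<Prod>i\<in>UNIV. \<rho> (s i)) * integral\<^sup>N (PiM UNIV (\<lambda>i. D (s i))) ?G
        = ennreal ((\<Prod>i\<in>UNIV. \<rho> (s i)) * cond_risk r r s)"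
      by (simp add: ennreal_mult cond_risk_nonneg)
  qed
  also have "\<dots> = ennreal (class_risk r)"
    unfolding class_risk_def using rho_pos
    by (intro sum_ennreal mult_nonneg_nonneg prod_nonneg cond_risk_nonneg) (auto intro: less_imp_le)
  finally show ?thesis
    using class_risk_nonneg by (simp add: integral_nonneg_AE tuple_loss_nonneg)
qed

lemma pop_risk_eq_sum_class_risk: "pop_risk M R \<rho> D \<phi> f = (\<Sum>r<R. \<rho> r * class_risk r)"
  using integral_tuple_loss_mixture
  by (simp add: pop_risk_def tuple_loss_def[abs_def] split_beta')

lemma measurable_closs_pick:
  assumes "a \<in> J" "b \<in> J" "range c \<subseteq> J"
  shows "(\<lambda>xs. closs \<phi> f (xs a) (xs b) (xs \<circ> c)) \<in> borel_measurable (PiM J (\<lambda>j. D (ys j)))"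
proof -
  have "(\<lambda>xs. xs j) \<in> measurable (PiM J (\<lambda>j. D (ys j))) M" if "j \<in> J" for j
    using measurable_component_singleton[OF that, of "\<lambda>j. D (ys j)"] by (simp cong: measurable_cong_sets add: sets_D)
  then show ?thesis
    using assms by (intro measurable_closs[OF phi_measurable f_measurable]) auto
qed

lemma integrable_closs_pick:
  assumes "a \<in> J" "b \<in> J" "range c \<subseteq> J"
  shows "integrable (PiM J (\<lambda>j. D (ys j))) (\<lambda>xs. closs \<phi> f (xs a) (xs b) (xs \<circ> c))"
proof -
  interpret P: prob_space "PiM J (\<lambda>j. D (ys j))"
    using prob_space_D by (intro prob_space_PiM) auto
  show ?thesis
  proof (rule P.integrable_const_bound[where B = B])
    show "AE xs in PiM J (\<lambda>j. D (ys j)). norm (closs \<phi> f (xs a) (xs b) (xs \<circ> c)) \<le> B"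
      using assms by (intro AE_I2) (auto simp: closs_nonneg space_PiM PiE_iff space_D subset_eq intro!: closs_le_B)
  qed (rule measurable_closs_pick[OF assms])
qed

lemma integral_closs_pick:
  assumes J: "finite J" "a \<in> J" "b \<in> J" "a \<noteq> b" and c: "range c \<subseteq> J - {a, b}" "inj c"
  shows "(\<integral>xs. closs \<phi> f (xs a) (xs b) (xs \<circ> c) \<partial>PiM J (\<lambda>j. D (ys j))) = cond_risk (ys a) (ys b) (ys \<circ> c)"
proof -
  have "range c \<subseteq> J" using c by auto
  note integrable = integrable_closs_pick[OF J(2,3) this]
  have "ennreal (\<integral>xs. closs \<phi> f (xs a) (xs b) (xs \<circ> c) \<partial>PiM J (\<lambda>j. D (ys j)))
      = (\<integral>\<^sup>+ xs. ennreal (tuple_loss (xs a, xs b, xs \<circ> c)) \<partial>PiM J (\<lambda>j. D (ys j)))"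
    using integrable closs_nonneg by (subst nn_integral_eq_integral) (auto simp: tuple_loss_def)
  also have "\<dots> = (\<integral>\<^sup>+ z. ennreal (tuple_loss z) \<partial>(D (ys a) \<Otimes>\<^sub>M (D (ys b) \<Otimes>\<^sub>M PiM UNIV (\<lambda>i. D (ys (c i))))))"
    using measurable_tuple_loss[OF refl refl refl]
    by (intro nn_integral_PiM_pick[OF prob_space_D sets_D J c]) measurable
  also have "\<dots> = ennreal (cond_risk (ys a) (ys b) (ys \<circ> c))"
    unfolding cond_risk_def
    by (simp add: nn_integral_tuple_loss prob_space_D prob_space_PiM sets_D sets_PiM_D)
  finally show ?thesis
    using cond_risk_nonneg closs_nonneg by (simp add: integral_nonneg_AE)
qed

lemma integral_U_Omega:
  assumes \<pi>: "\<pi> permutes {..<N}" and n_pos: "0 < half_size CARD('k) N"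
  shows "(\<integral>xs. U_Omega \<phi> f N xs ys \<pi> r \<partial>PiM {..<N} (\<lambda>j. D (ys j)))
    = (if pos_pairs CARD('k) N ys \<pi> r = {} then 0
       else (\<Sum>c\<in>neg_tuples N \<pi>. cond_risk r r (ys \<circ> c)) / real (card (neg_tuples N \<pi> :: ('k \<Rightarrow> nat) set)))"
proof -
  let ?T = "Omega_pi N ys \<pi> r :: (nat \<times> nat \<times> ('k \<Rightarrow> nat)) set"
  let ?P = "pos_pairs CARD('k) N ys \<pi> r" and ?C = "neg_tuples N \<pi> :: ('k \<Rightarrow> nat) set"
  let ?M = "PiM {..<N} (\<lambda>j. D (ys j))"
  let ?loss = "\<lambda>t xs. closs \<phi> f (xs (fst t)) (xs (fst (snd t))) (xs \<circ> snd (snd t))"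
  have T: "?T = (\<lambda>((a, b), c). (a, b, c)) ` (?P \<times> ?C)"
    by (rule Omega_pi_eq_pos_pairs_times_neg_tuples)
  have inj: "inj_on (\<lambda>((a, b), c). (a, b, c)) (?P \<times> ?C)"
    by (auto simp: inj_on_def)
  have C: "finite ?C" "?C \<noteq> {}" using neg_tuples_nonempty[OF \<pi> n_pos] by auto
  have ys_T: "ys (fst t) = r" "ys (fst (snd t)) = r" if "t \<in> ?T" for t
    using that by (auto simp: Omega_pi_def Let_def)
  show ?thesis
  proof (cases "?P = {}")
    case True
    then show ?thesis by (simp add: U_Omega_def T)
  next
    case False
    then have "?T \<noteq> {}" using C by (simp add: T)
    then have "(\<integral>xs. U_Omega \<phi> f N xs ys \<pi> r \<partial>?M) = (\<integral>xs. (\<Sum>t\<in>?T. ?loss t xs) \<partial>?M) / real (card ?T)"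
      by (simp add: U_Omega_def Let_def split_beta')
    also have "(\<integral>xs. (\<Sum>t\<in>?T. ?loss t xs) \<partial>?M) = (\<Sum>t\<in>?T. \<integral>xs. ?loss t xs \<partial>?M)"
      using Omega_pi_memD(1-3)[OF \<pi>] by (intro Bochner_Integration.integral_sum integrable_closs_pick)
    also have "\<dots> = (\<Sum>t\<in>?T. cond_risk r r (ys \<circ> snd (snd t)))"
    proof (rule sum.cong[OF refl])
      fix t assume t: "t \<in> ?T"
      show "(\<integral>xs. ?loss t xs \<partial>?M) = cond_risk r r (ys \<circ> snd (snd t))"
        using integral_closs_pick[OF finite_lessThan Omega_pi_memD(1,2,4-6)[OF \<pi> t]] ys_T[OF t] by simp
    qed
    also have "\<dots> = (\<Sum>x\<in>?P \<times> ?C. cond_risk r r (ys \<circ> snd x))"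
      unfolding T by (subst sum.reindex[OF inj]) (simp add: comp_def split_beta')
    also have "\<dots> = real (card ?P) * (\<Sum>c\<in>?C. cond_risk r r (ys \<circ> c))"
      by (simp add: sum.cartesian_product')
    also have "real (card ?T) = real (card ?P) * real (card ?C)"
      by (simp add: T card_image[OF inj] card_cartesian_product)
    finally show ?thesis
      using False C by (simp add: comp_def)
  qed
qed

definition expected_weight :: "nat \<Rightarrow> (nat \<Rightarrow> nat) \<Rightarrow> nat \<Rightarrow> real" where
  "expected_weight N \<pi> r = (\<Sum>ys\<in>{..<N} \<rightarrow>\<^sub>E {..<R}. (\<Prod>j<N. \<rho> (ys j)) * omega_w R CARD('k) N ys \<pi> r)"

lemma expected_weighted_U_Omega:
  assumes \<pi>: "\<pi> permutes {..<N}" and n_pos: "0 < half_size CARD('k) N"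
  shows "(\<Sum>ys\<in>{..<N} \<rightarrow>\<^sub>E {..<R}. (\<Prod>j<N. \<rho> (ys j)) *
            (omega_w R CARD('k) N ys \<pi> r * (\<integral>xs. U_Omega \<phi> f N xs ys \<pi> r \<partial>PiM {..<N} (\<lambda>j. D (ys j)))))
         = expected_weight N \<pi> r * class_risk r"
proof -
  let ?C = "neg_tuples N \<pi> :: ('k \<Rightarrow> nat) set"
  let ?w = "\<lambda>ys. omega_w R CARD('k) N ys \<pi> r"
  let ?p = "\<lambda>ys. \<Prod>j<N. \<rho> (ys j)"
  have C: "finite ?C" "?C \<noteq> {}" using neg_tuples_nonempty[OF \<pi> n_pos] by auto
  have "?w ys * (\<integral>xs. U_Omega \<phi> f N xs ys \<pi> r \<partial>PiM {..<N} (\<lambda>j. D (ys j)))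
      = (\<Sum>c\<in>?C. ?w ys * cond_risk r r (ys \<circ> c)) / real (card ?C)" for ys
    by (cases "pos_pairs CARD('k) N ys \<pi> r = {}")
      (simp_all add: integral_U_Omega[OF \<pi> n_pos] omega_w_eq_0_if_no_pos_pairs sum_distrib_left)
  then have "(\<Sum>ys\<in>{..<N} \<rightarrow>\<^sub>E {..<R}. ?p ys *
        (?w ys * (\<integral>xs. U_Omega \<phi> f N xs ys \<pi> r \<partial>PiM {..<N} (\<lambda>j. D (ys j)))))
      = (\<Sum>c\<in>?C. \<Sum>ys\<in>{..<N} \<rightarrow>\<^sub>E {..<R}. ?p ys * ?w ys * cond_risk r r (ys \<circ> c)) / real (card ?C)"
    by (simp add: sum_divide_distrib sum_distrib_left mult.assoc sum.swap[of _ ?C])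
  also have "\<dots> = (\<Sum>c\<in>?C. expected_weight N \<pi> r * class_risk r) / real (card ?C)"
  proof (intro arg_cong2[where f = "(/)"] sum.cong refl)
    fix c assume "c \<in> ?C"
    then have c: "inj c" "range c \<subseteq> {..<N}" "Ipi CARD('k) N \<pi> \<inter> range c = {}"
      by (auto simp: neg_tuples_def)
    \<comment> \<open>the weight only reads labels in \<open>I\<^sub>\<pi>\<close>, which the negatives avoid\<close>
    have "(\<Sum>ys\<in>{..<N} \<rightarrow>\<^sub>E {..<R}. ?p ys * ?w ys * cond_risk r r (ys \<circ> c))
        = (\<Sum>ys\<in>{..<N} \<rightarrow>\<^sub>E {..<R}. ?p ys * ?w ys) * class_risk r"
      unfolding class_risk_def
    proof (rule sum_PiE_prod_factor[OF _ _ rho_sum c(1,2)])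
      fix ys ys' :: "nat \<Rightarrow> nat" assume "\<And>j. j \<in> {..<N} - range c \<Longrightarrow> ys j = ys' j"
      then show "?w ys = ?w ys'"
        using c(3) Ipi_subset[OF \<pi>] by (intro omega_w_cong) auto
    qed auto
    then show "(\<Sum>ys\<in>{..<N} \<rightarrow>\<^sub>E {..<R}. ?p ys * ?w ys * cond_risk r r (ys \<circ> c))
        = expected_weight N \<pi> r * class_risk r"
      by (simp add: expected_weight_def)
  qed
  also have "\<dots> = expected_weight N \<pi> r * class_risk r"
    using C by simp
  finally show ?thesis .
qed

lemma integrable_U_Omega:
  assumes \<pi>: "\<pi> permutes {..<N}"
  shows "integrable (PiM {..<N} (\<lambda>j. D (ys j))) (\<lambda>xs. U_Omega \<phi> f N xs ys \<pi> r)"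
proof -
  let ?T = "Omega_pi N ys \<pi> r :: (nat \<times> nat \<times> ('k \<Rightarrow> nat)) set"
  have "integrable (PiM {..<N} (\<lambda>j. D (ys j)))
      (\<lambda>xs. \<Sum>t\<in>?T. case t of (a, b, c) \<Rightarrow> closs \<phi> f (xs a) (xs b) (xs \<circ> c))"
  proof (rule Bochner_Integration.integrable_sum)
    fix t assume "t \<in> ?T"
    from integrable_closs_pick[OF Omega_pi_memD(1-3)[OF \<pi> this]]
    show "integrable (PiM {..<N} (\<lambda>j. D (ys j))) (\<lambda>xs. case t of (a, b, c) \<Rightarrow> closs \<phi> f (xs a) (xs b) (xs \<circ> c))"
      by (simp add: split_beta)
  qed
  then show ?thesis
    unfolding U_Omega_def Let_def by (cases "?T = {}") simp_all
qed

lemma sample_expect_Ubar_eq: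
  assumes n_pos: "0 < half_size CARD('k) N"
  shows "sample_expect R \<rho> D N (Ubar R \<phi> f N)
    = (\<Sum>\<pi>\<in>{\<pi>. \<pi> permutes {..<N}}. \<Sum>r<R. expected_weight N \<pi> r * class_risk r) / fact N"
proof -
  let ?Pm = "{\<pi>. \<pi> permutes {..<N}}"
  let ?M = "\<lambda>ys. PiM {..<N} (\<lambda>j. D (ys j))"
  let ?w = "\<lambda>ys \<pi> r. omega_w R CARD('k) N ys \<pi> r"
  let ?EU = "\<lambda>ys \<pi> r. \<integral>xs. U_Omega \<phi> f N xs ys \<pi> r \<partial>?M ys"
  have "(\<integral>xs. Ubar R \<phi> f N xs ys \<partial>?M ys) = (\<Sum>\<pi>\<in>?Pm. \<Sum>r<R. ?w ys \<pi> r * ?EU ys \<pi> r) / fact N" for ys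
    unfolding Ubar_def
    by (simp add: integrable_U_Omega Bochner_Integration.integral_sum Bochner_Integration.integrable_sum)
  then have "sample_expect R \<rho> D N (Ubar R \<phi> f N)
      = (\<Sum>\<pi>\<in>?Pm. \<Sum>r<R. \<Sum>ys\<in>{..<N} \<rightarrow>\<^sub>E {..<R}. (\<Prod>j<N. \<rho> (ys j)) * (?w ys \<pi> r * ?EU ys \<pi> r)) / fact N"
    unfolding sample_expect_def
    by (simp add: sum_divide_distrib sum_distrib_left sum.swap[of _ "{..<N} \<rightarrow>\<^sub>E {..<R}"])
  also have "\<dots> = (\<Sum>\<pi>\<in>?Pm. \<Sum>r<R. expected_weight N \<pi> r * class_risk r) / fact N"
    using expected_weighted_U_Omega[OF _ n_pos] by simp
  finally show ?thesis .
qed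

lemma expected_npi:
  assumes \<pi>: "\<pi> permutes {..<N}" and r: "r < R"
  shows "(\<Sum>ys\<in>{..<N} \<rightarrow>\<^sub>E {..<R}. (\<Prod>j<N. \<rho> (ys j)) * real (npi k N ys \<pi> r)) = real (half_size k N) * \<rho> r"
proof -
  have "real (npi k N ys \<pi> r) = (\<Sum>j\<in>Ipi k N \<pi>. if ys j = r then 1 else 0)" for ys
    by (simp add: npi_def sum.inter_filter[symmetric])
  then have "(\<Sum>ys\<in>{..<N} \<rightarrow>\<^sub>E {..<R}. (\<Prod>j<N. \<rho> (ys j)) * real (npi k N ys \<pi> r))
      = (\<Sum>j\<in>Ipi k N \<pi>. \<Sum>ys\<in>{..<N} \<rightarrow>\<^sub>E {..<R}. (\<Prod>i<N. \<rho> (ys i)) * (if ys j = r then 1 else 0))"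
    by (simp add: sum_distrib_left sum.swap[of _ "Ipi k N \<pi>"])
  also have "\<dots> = (\<Sum>j\<in>Ipi k N \<pi>. \<rho> r)"
    using Ipi_subset[OF \<pi>] r rho_sum by (intro sum.cong refl sum_PiE_prod_indicator) auto
  finally show ?thesis
    by (simp add: card_Ipi[OF \<pi>])
qed

lemma expected_weight_bounds:
  assumes \<pi>: "\<pi> permutes {..<N}" and n: "R < half_size CARD('k) N" and r: "r < R"
  defines "n \<equiv> real (half_size CARD('k) N)"
  shows "expected_weight N \<pi> r \<le> n * \<rho> r / (n - real R)"
    and "\<rho> r - 1 / n \<le> expected_weight N \<pi> r"
proof -
  let ?L = "{..<N} \<rightarrow>\<^sub>E {..<R}" and ?p = "\<lambda>ys. \<Prod>j<N. \<rho> (ys j)"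
  let ?m = "\<lambda>ys. real (npi CARD('k) N ys \<pi> r)"
  have p_nonneg: "0 \<le> ?p ys" if "ys \<in> ?L" for ys
    using that rho_pos by (intro prod_nonneg) (auto simp: PiE_iff less_imp_le)
  have omega_bounds: "omega_w R CARD('k) N ys \<pi> r \<le> ?m ys / (n - real R)"
      "(?m ys - 1) / n \<le> omega_w R CARD('k) N ys \<pi> r" if "ys \<in> ?L" for ys
  proof -
    have "ys j < R" if "j \<in> Ipi CARD('k) N \<pi>" for j
      using \<open>ys \<in> ?L\<close> that Ipi_subset[OF \<pi>, of "CARD('k)"] by auto
    from omega_w_bounds[OF \<pi> n this] show "omega_w R CARD('k) N ys \<pi> r \<le> ?m ys / (n - real R)"
      "(?m ys - 1) / n \<le> omega_w R CARD('k) N ys \<pi> r" by (simp_all add: n_def)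
  qed
  have "expected_weight N \<pi> r \<le> (\<Sum>ys\<in>?L. ?p ys * (?m ys / (n - real R)))"
    unfolding expected_weight_def
    by (rule sum_mono, rule mult_left_mono) (simp_all add: p_nonneg omega_bounds(1))
  also have "\<dots> = n * \<rho> r / (n - real R)"
    by (simp only: times_divide_eq_right sum_divide_distrib[symmetric] expected_npi[OF \<pi> r] n_def)
  finally show "expected_weight N \<pi> r \<le> n * \<rho> r / (n - real R)" .
  have "\<rho> r - 1 / n = (\<Sum>ys\<in>?L. ?p ys * ?m ys) / n - (\<Sum>ys\<in>?L. ?p ys) / n"
    using n by (simp add: expected_npi[OF \<pi> r] sum_PiE_prod_eq_1[OF _ _ rho_sum] n_def)
  also have "\<dots> = (\<Sum>ys\<in>?L. ?p ys * ((?m ys - 1) / n))"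
    by (simp add: sum_divide_distrib sum_subtractf[symmetric] diff_divide_distrib right_diff_distrib)
  also have "\<dots> \<le> expected_weight N \<pi> r"
    unfolding expected_weight_def
    by (rule sum_mono, rule mult_left_mono) (simp_all add: p_nonneg omega_bounds(2))
  finally show "\<rho> r - 1 / n \<le> expected_weight N \<pi> r" .
qed

lemma sample_expect_Ubar_bounds:
  assumes n: "R < half_size CARD('k) N"
  defines "n \<equiv> real (half_size CARD('k) N)"
  shows "(1 - 2 / (n * Min (\<rho> ` {..<R}))) * pop_risk M R \<rho> D \<phi> f \<le> sample_expect R \<rho> D N (Ubar R \<phi> f N)"
    and "sample_expect R \<rho> D N (Ubar R \<phi> f N) \<le> (1 + real R / (n - real R)) * pop_risk M R \<rho> D \<phi> f"
proof -
  let ?Pm = "{\<pi>. \<pi> permutes {..<N}}" and ?m = "Min (\<rho> ` {..<R})"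
  let ?S = "\<lambda>\<pi>. \<Sum>r<R. expected_weight N \<pi> r * class_risk r"
  let ?lo = "1 - 2 / (n * ?m)" and ?hi = "1 + real R / (n - real R)"
  have card_Pm: "real (card ?Pm) = fact N"
    using card_permutations[of "{..<N}" N] by simp
  have n_pos: "0 < n" and gap: "0 < n - real R" using n by (auto simp: n_def)
  have "R \<noteq> 0" using rho_sum by (cases R) auto
  then have m: "0 < ?m" "\<And>r. r < R \<Longrightarrow> ?m \<le> \<rho> r"
    using rho_pos by (subst Min_gr_iff) auto
  have "?lo * pop_risk M R \<rho> D \<phi> f \<le> ?S \<pi> \<and> ?S \<pi> \<le> ?hi * pop_risk M R \<rho> D \<phi> f"
    if \<pi>: "\<pi> permutes {..<N}" for \<pi>
  proof
    have "\<rho> r * ?lo \<le> expected_weight N \<pi> r" if r: "r < R" for r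
    proof -
      have "1 / n \<le> (\<rho> r / ?m) * (2 / n)"
        using m(1) m(2)[OF r] n_pos by (simp add: field_simps)
      then have "\<rho> r * ?lo \<le> \<rho> r - 1 / n"
        using m(1) n_pos by (simp add: field_simps)
      also have "\<dots> \<le> expected_weight N \<pi> r"
        using expected_weight_bounds(2)[OF \<pi> n r] by (simp add: n_def)
      finally show ?thesis .
    qed
    then show "?lo * pop_risk M R \<rho> D \<phi> f \<le> ?S \<pi>"
      unfolding pop_risk_eq_sum_class_risk sum_distrib_left
      by (auto simp: mult.assoc[symmetric] mult.commute[of ?lo] intro!: sum_mono mult_right_mono class_risk_nonneg)
    have "expected_weight N \<pi> r \<le> ?hi * \<rho> r" if r: "r < R" for r
      using expected_weight_bounds(1)[OF \<pi> n r] gap by (simp add: n_def field_simps)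
    then show "?S \<pi> \<le> ?hi * pop_risk M R \<rho> D \<phi> f"
      unfolding pop_risk_eq_sum_class_risk sum_distrib_left
      by (auto simp: mult.assoc[symmetric] intro!: sum_mono mult_right_mono class_risk_nonneg)
  qed
  then have "card ?Pm * (?lo * pop_risk M R \<rho> D \<phi> f) \<le> sum ?S ?Pm"
    and "sum ?S ?Pm \<le> card ?Pm * (?hi * pop_risk M R \<rho> D \<phi> f)"
    by (auto intro: sum_bounded_below sum_bounded_above)
  then show "?lo * pop_risk M R \<rho> D \<phi> f \<le> sample_expect R \<rho> D N (Ubar R \<phi> f N)"
    and "sample_expect R \<rho> D N (Ubar R \<phi> f N) \<le> ?hi * pop_risk M R \<rho> D \<phi> f"
    using n card_Pm by (simp_all add: sample_expect_Ubar_eq field_simps)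
qed

end

lemma pop_risk_cong:
  assumes "\<And>r. r < R \<Longrightarrow> D r = D' r"
  shows "pop_risk M R \<rho> D \<phi> f = pop_risk M R \<rho> D' \<phi> f"
proof -
  have "mixture M R \<rho> D = mixture M R \<rho> D'"
    using assms by (simp add: mixture_def)
  then show ?thesis
    using assms by (simp add: pop_risk_def)
qed

lemma sample_expect_cong:
  assumes "\<And>r. r < R \<Longrightarrow> D r = D' r"
  shows "sample_expect R \<rho> D N G = sample_expect R \<rho> D' N G"
  unfolding sample_expect_def
  using assms by (intro sum.cong refl arg_cong2[where f = "(*)"] arg_cong2[where f = "integral\<^sup>L"] PiM_cong)
    (auto simp: PiE_iff)

lemma tendsto_of_relative_bounds:
  fixes n :: "nat \<Rightarrow> real"
  assumes n: "filterlim n at_top sequentially"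
    and bounds: "\<forall>\<^sub>F N in sequentially. (1 - c / (n N * m)) * p \<le> E N \<and> E N \<le> (1 + b / (n N - b)) * p"
  shows "E \<longlonglongrightarrow> p"
proof (rule tendsto_sandwich)
  have "(\<lambda>N. (c / m) / n N) \<longlonglongrightarrow> 0"
    using n by (intro tendsto_divide_0[OF tendsto_const] filterlim_at_top_imp_at_infinity)
  then have "(\<lambda>N. (1 - c / (n N * m)) * p) \<longlonglongrightarrow> (1 - 0) * p"
    by (intro tendsto_intros) (simp add: mult.commute)
  then show "(\<lambda>N. (1 - c / (n N * m)) * p) \<longlonglongrightarrow> p"
    by simp
  have "filterlim (\<lambda>N. - b + n N) at_top sequentially"
    by (rule filterlim_tendsto_add_at_top[OF tendsto_const n])
  then have "(\<lambda>N. b / (n N - b)) \<longlonglongrightarrow> 0"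
    by (intro tendsto_divide_0[OF tendsto_const] filterlim_at_top_imp_at_infinity) simp
  then have "(\<lambda>N. (1 + b / (n N - b)) * p) \<longlonglongrightarrow> (1 + 0) * p"
    by (intro tendsto_intros)
  then show "(\<lambda>N. (1 + b / (n N - b)) * p) \<longlonglongrightarrow> p"
    by simp
qed (use bounds in \<open>auto elim: eventually_mono\<close>)

theorem mainTheorem6:
  fixes M :: "'a measure"
    and R :: nat
    and \<rho> :: "nat \<Rightarrow> real"
    and D :: "nat \<Rightarrow> 'a measure"
    and \<phi> :: "real^'k \<Rightarrow> real"
    and f :: "'a \<Rightarrow> real^'d"
    and B :: real
  assumes R2: "R \<ge> 2"
    and rho_pos: "\<forall>r<R. \<rho> r > 0"
    and rho_sum: "(\<Sum>r<R. \<rho> r) = 1"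
    and D_prob: "\<forall>r<R. prob_space (D r)"
    and D_sets: "\<forall>r<R. sets (D r) = sets M"
    and f_meas: "f \<in> borel_measurable M"
    and phi_meas: "\<phi> \<in> borel_measurable borel"
    and phi_nonneg: "\<forall>v. \<phi> v \<ge> 0"
    and loss_bounded: "\<forall>x\<in>space M. \<forall>xp\<in>space M. \<forall>xn. (\<forall>i. xn i \<in> space M) \<longrightarrow>
                          closs \<phi> f x xp xn \<le> B"
  shows "(\<forall>N. R < half_size CARD('k) N \<longrightarrow>
            (1 - 2 / (real (half_size CARD('k) N) * Min (\<rho> ` {..<R}))) * pop_risk M R \<rho> D \<phi> f
              \<le> sample_expect R \<rho> D N (Ubar R \<phi> f N)
          \<and> sample_expect R \<rho> D N (Ubar R \<phi> f N)
              \<le> (1 + real R / (real (half_size CARD('k) N) - real R)) * pop_risk M R \<rho> D \<phi> f)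
       \<and> (\<lambda>N. sample_expect R \<rho> D N (Ubar R \<phi> f N)) \<longlonglongrightarrow> pop_risk M R \<rho> D \<phi> f"
proof -
  \<comment> \<open>the locale wants every \<open>D r\<close> to be a probability measure; only \<open>r < R\<close> matters\<close>
  define D' where "D' r = (if r < R then D r else D 0)" for r
  have D_eq: "\<And>r. r < R \<Longrightarrow> D r = D' r" by (simp add: D'_def)
  have "0 < R" using R2 by simp
  interpret contrastive_risk M R \<rho> D' \<phi> f B
  proof (intro contrastive_risk.intro label_mixture.intro contrastive_risk_axioms.intro)
    show "prob_space (D' r)" "sets (D' r) = sets M" for r
      using D_prob D_sets \<open>0 < R\<close> by (simp_all add: D'_def)
    show "closs \<phi> f x xp xn \<le> B" if "x \<in> space M" "xp \<in> space M" "\<And>i. xn i \<in> space M" for x xp xn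
      using loss_bounded that by blast
  qed (use rho_pos rho_sum phi_meas f_meas phi_nonneg in auto)
  let ?n = "\<lambda>N. real (half_size CARD('k) N)"
  let ?E = "\<lambda>N. sample_expect R \<rho> D N (Ubar R \<phi> f N)" and ?L = "pop_risk M R \<rho> D \<phi> f"
  have bounds: "(1 - 2 / (?n N * Min (\<rho> ` {..<R}))) * ?L \<le> ?E N \<and> ?E N \<le> (1 + real R / (?n N - real R)) * ?L"
    if "R < half_size CARD('k) N" for N
    using sample_expect_Ubar_bounds[OF that] by (simp add: pop_risk_cong[OF D_eq] sample_expect_cong[OF D_eq])
  have "\<forall>\<^sub>F N in sequentially. real R < ?n N"
    using half_size_tendsto_at_top[of "CARD('k)"] unfolding filterlim_at_top_dense by blast
  then have "?E \<longlonglongrightarrow> ?L"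
    by (intro tendsto_of_relative_bounds[OF half_size_tendsto_at_top[of "CARD('k)"],
          where c = 2 and m = "Min (\<rho> ` {..<R})" and b = "real R"])
      (auto elim!: eventually_mono dest: bounds)
  with bounds show ?thesis by blast
qed

end
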